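(* Let $2\le d\le m$ and $\delta>0$. Let $A$ be a deterministic priority mechanism that processes elementary bids and is truthful without money and with verification for CAs with known multi-minded bidders. Then there is an instance with $m$ goods in which all demanded sets have cardinality at most $d$ on which the social welfare of $A$ is less than $\mathrm{OPT}/((1-\delta)d)$; i.e., the approximation ratio of $A$ is greater than $(1-\delta)d$.
   Context: Combinatorial auction with a set $\mathsf U$ of $m$ goods (single copy each) and bidders; bidder $i$ has a public collection $\mathcal S_i$ of nonempty subsets of $\mathsf U$ (known bidders) and a private valuation $v_i:\mathcal S_i\to\mathbb R_{\ge0}$. Truthfulness without money and with verification (known bidders) means: for all $i$, $\mathbf b_{-i}$, true $v_i$ and declarations $b_i$ with $b_i(A_i(b_i,\mathbf b_{-i}))\le v_i(A_i(b_i,\mathbf b_{-i}))$, $v_i(A_i(v_i,\mathbf b_{-i}))\ge v_i(A_i(b_i,\mathbf b_{-i}))$. Priority mechanism processing elementary bids: the input is a finite set $I$ of elementary bids $(i,S,v)$ (bidder $i$ declares value $v$ for demanded set $S$), drawn from the class $\mathcal I$ of all possible elementary bids. The mechanism proceeds in rounds; in each round, without looking at the unprocessed items, it chooses a total order on $\mathcal I$ (which may depend on the items processed and decisions taken so far), receives the first unprocessed item of $I$ in this order, and makes an irrevocable accept/reject decision on it; accepting $(i,S,v)$ allocates $S$ to $i$ and yields welfare $v$. The output must be a feasible allocation (each bidder gets at most one set, sets pairwise disjoint). $\mathrm{OPT}$ is the maximum welfare of a feasible allocation. *)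

theory Defs
  imports Complex_Main
begin

text \<open>Goods are natural numbers; the universe of m goods is {0..<m}. Bidders are natural numbers.
An elementary bid (i, S, v): bidder i declares value v for demanded set S.\<close>

type_synonym ebid = "nat \<times> nat set \<times> real"

text \<open>History of a priority mechanism: the items processed so far, with the accept(True)/reject(False)
decision taken on each.\<close>
type_synonym hist = "(ebid \<times> bool) list"

text \<open>A deterministic (adaptive) priority mechanism is given by
  ord h : the total order on the class of all elementary bids chosen after history h,
  dec h x : the irrevocable accept/reject decision on item x after history h.\<close>

fun prun :: "(hist \<Rightarrow> ebid rel) \<Rightarrow> (hist \<Rightarrow> ebid \<Rightarrow> bool) \<Rightarrow> ebid set \<Rightarrow> nat \<Rightarrow> hist" where
  "prun ord dec I 0 = []"
| "prun ord dec I (Suc n) =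
     (let h = prun ord dec I n; R = I - fst ` set h in
      if R = {} then h
      else (let x = (THE x. x \<in> R \<and> (\<forall>y\<in>R. (x, y) \<in> ord h)) in h @ [(x, dec h x)]))"

definition pout :: "(hist \<Rightarrow> ebid rel) \<Rightarrow> (hist \<Rightarrow> ebid \<Rightarrow> bool) \<Rightarrow> ebid set \<Rightarrow> ebid set" where
  "pout ord dec I = {x. (x, True) \<in> set (prun ord dec I (card I))}"

definition feasible :: "ebid set \<Rightarrow> bool" where
  "feasible X \<longleftrightarrow> (\<forall>(i, S, w) \<in> X. \<forall>(i', S', w') \<in> X.
      (i, S, w) \<noteq> (i', S', w') \<longrightarrow> i \<noteq> i' \<and> S \<inter> S' = {})"

definition welfare :: "ebid set \<Rightarrow> real" where
  "welfare X = (\<Sum>x\<in>X. snd (snd x))"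

text \<open>An instance: public collections C i (empty for non-participating bidders) and
valuations v i (only relevant on C i). Valid instance over the universe {0..<m}.\<close>
definition inst_ok :: "nat \<Rightarrow> (nat \<Rightarrow> nat set set) \<Rightarrow> (nat \<Rightarrow> nat set \<Rightarrow> real) \<Rightarrow> bool" where
  "inst_ok m C v \<longleftrightarrow> finite {i. C i \<noteq> {}} \<and>
     (\<forall>i. \<forall>S\<in>C i. S \<noteq> {} \<and> S \<subseteq> {0..<m} \<and> 0 \<le> v i S)"

definition bids :: "(nat \<Rightarrow> nat set set) \<Rightarrow> (nat \<Rightarrow> nat set \<Rightarrow> real) \<Rightarrow> ebid set" where
  "bids C v = {(i, S, v i S) | i S. S \<in> C i}"

definition OPT :: "(nat \<Rightarrow> nat set set) \<Rightarrow> (nat \<Rightarrow> nat set \<Rightarrow> real) \<Rightarrow> real" where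
  "OPT C v = Max (welfare ` {X. X \<subseteq> bids C v \<and> feasible X})"

definition alloc :: "ebid set \<Rightarrow> nat \<Rightarrow> nat set" where
  "alloc X i = (if \<exists>S w. (i, S, w) \<in> X then (THE S. \<exists>w. (i, S, w) \<in> X) else {})"

definition val :: "(nat set \<Rightarrow> real) \<Rightarrow> nat set \<Rightarrow> real" where
  "val f S = (if S = {} then 0 else f S)"

definition priority_mech :: "nat \<Rightarrow> (hist \<Rightarrow> ebid rel) \<Rightarrow> (hist \<Rightarrow> ebid \<Rightarrow> bool) \<Rightarrow> bool" where
  "priority_mech m ord dec \<longleftrightarrow> (\<forall>h. linear_order (ord h)) \<and>
     (\<forall>C v. inst_ok m C v \<longrightarrow> feasible (pout ord dec (bids C v)))"

text \<open>Truthfulness without money and with verification (known bidders): for declared profile b,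
bidder i with true valuation t, if b i does not overstate the value of the set i receives
under b, then truthful reporting is at least as good.\<close>
definition truthful_verif :: "nat \<Rightarrow> (hist \<Rightarrow> ebid rel) \<Rightarrow> (hist \<Rightarrow> ebid \<Rightarrow> bool) \<Rightarrow> bool" where
  "truthful_verif m ord dec \<longleftrightarrow>
     (\<forall>C b i t. inst_ok m C b \<longrightarrow> inst_ok m C (b(i := t)) \<longrightarrow>
        (let Ab = alloc (pout ord dec (bids C b)) i;
             At = alloc (pout ord dec (bids C (b(i := t)))) i
         in val (b i) Ab \<le> val t Ab \<longrightarrow> val t Ab \<le> val t At))"

end

theory Submission
  imports Defs
begin

text \<open>Suppose a truthful priority mechanism had ratio at most (1 - \<delta>) d. It must accept any lone
positive bid in the first round, since otherwise its welfare is 0. Consider the d + 1 bids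
(n, T, 1) on a set T of d goods and let (i, T, 1) be ranked first among them. For every other
bidder n and good g \<in> T, truthfulness forces (n, T, 1) to be ranked before (n, {g}, w), w < 1:
otherwise, for a bidder n demanding T and {g}, the true valuation (T \<mapsto> 1, {g} \<mapsto> w) gets {g},
so the declaration (T \<mapsto> 1, {g} \<mapsto> 0), which does not overstate the value of T, must not receive T,
and then its welfare is 0 < OPT. Hence (i, T, 1) precedes d singleton bids on distinct goods of
T; on that instance the mechanism accepts (i, T, 1) first and gets welfare 1, while
OPT \<ge> d w > (1 - \<delta>) d.\<close>

lemma linear_order_refl: "linear_order r \<Longrightarrow> (x, x) \<in> r"
  by (auto simp: linear_order_on_def partial_order_on_def preorder_on_def refl_on_def)

lemma linear_order_trans: "linear_order r \<Longrightarrow> (x, y) \<in> r \<Longrightarrow> (y, z) \<in> r \<Longrightarrow> (x, z) \<in> r"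
  unfolding linear_order_on_def partial_order_on_def preorder_on_def trans_def by blast

lemma linear_order_antisym: "linear_order r \<Longrightarrow> (x, y) \<in> r \<Longrightarrow> (y, x) \<in> r \<Longrightarrow> x = y"
  unfolding linear_order_on_def partial_order_on_def antisym_def by blast

lemma linear_order_total:
  assumes "linear_order r"
  shows "(x, y) \<in> r \<or> (y, x) \<in> r"
  using assms linear_order_refl[OF assms, of x] unfolding linear_order_on_def total_on_def
  by (cases "x = y") auto

lemma linear_order_finite_least:
  assumes "linear_order r" "finite A" "A \<noteq> {}"
  shows "\<exists>a\<in>A. \<forall>b\<in>A. (a, b) \<in> r"
  using assms(2,3)
proof (induction A rule: finite_ne_induct)
  case (singleton x)
  then show ?case using linear_order_refl[OF assms(1)] by auto
next
  case (insert x F)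
  then obtain a where a: "a \<in> F" "\<forall>b\<in>F. (a, b) \<in> r" by auto
  show ?case
  proof (cases "(a, x) \<in> r")
    case True
    then show ?thesis using a by auto
  next
    case False
    then have "(x, a) \<in> r" using linear_order_total[OF assms(1), of a x] by blast
    then show ?thesis using a linear_order_refl[OF assms(1)] linear_order_trans[OF assms(1)] by blast
  qed
qed

lemma linear_order_the_least:
  assumes "linear_order r" "a \<in> A" "\<forall>b\<in>A. (a, b) \<in> r"
  shows "(THE x. x \<in> A \<and> (\<forall>y\<in>A. (x, y) \<in> r)) = a"
  using assms linear_order_antisym[OF assms(1)] by (intro the_equality) auto

lemma prun_processed_subset:
  assumes "\<forall>h. linear_order (ord h)" "finite I"
  shows "fst ` set (prun ord dec I n) \<subseteq> I"
proof (induction n)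
  case 0
  then show ?case by simp
next
  case (Suc n)
  define h where "h = prun ord dec I n"
  define R where "R = I - fst ` set h"
  show ?case
  proof (cases "R = {}")
    case True
    then show ?thesis using Suc by (simp add: h_def R_def Let_def)
  next
    case False
    have "finite R" using assms(2) by (simp add: R_def)
    then obtain a where a: "a \<in> R" "\<forall>b\<in>R. (a, b) \<in> ord h"
      using linear_order_finite_least[OF assms(1)[rule_format] _ False] by blast
    then have "(THE x. x \<in> R \<and> (\<forall>y\<in>R. (x, y) \<in> ord h)) \<in> I"
      using linear_order_the_least[of "ord h" a R] assms(1) by (simp add: R_def)
    then show ?thesis using Suc False by (simp add: h_def R_def Let_def)
  qed
qed

lemma prun_mono: "set (prun ord dec I n) \<subseteq> set (prun ord dec I (n + k))"
  by (induction k) (auto simp: Let_def)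

lemma pout_subset:
  assumes "\<forall>h. linear_order (ord h)" "finite I"
  shows "pout ord dec I \<subseteq> I"
  using prun_processed_subset[OF assms] unfolding pout_def by force

lemma prun_first_step:
  assumes "linear_order (ord [])" "x \<in> I" "\<forall>y\<in>I. (x, y) \<in> ord []"
  shows "prun ord dec I 1 = [(x, dec [] x)]"
proof -
  have "I \<noteq> {}" using assms(2) by blast
  then show ?thesis
    using linear_order_the_least[OF assms]
    by (simp only: One_nat_def prun.simps Let_def list.set set_empty image_empty Diff_empty
        if_False append_Nil)
qed

lemma pout_first_accepted:
  assumes "linear_order (ord [])" "finite I" "x \<in> I" "\<forall>y\<in>I. (x, y) \<in> ord []" "dec [] x"
  shows "x \<in> pout ord dec I"
proof -
  have "0 < card I" using assms(2,3) card_gt_0_iff by blast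
  then have "set (prun ord dec I 1) \<subseteq> set (prun ord dec I (card I))"
    using prun_mono[of ord dec I 1 "card I - 1"] by simp
  then show ?thesis
    using prun_first_step[of ord x I dec, OF assms(1,3,4)] assms(5) unfolding pout_def by auto
qed

lemma pout_singleton:
  assumes "linear_order (ord [])"
  shows "pout ord dec {x} = (if dec [] x then {x} else {})"
  using prun_first_step[of ord x "{x}" dec, OF assms] linear_order_refl[OF assms] by (auto simp: pout_def)

lemma feasible_iff:
  "feasible X \<longleftrightarrow> (\<forall>x\<in>X. \<forall>y\<in>X. x \<noteq> y \<longrightarrow> fst x \<noteq> fst y \<and> fst (snd x) \<inter> fst (snd y) = {})"
  by (simp add: feasible_def split_def prod_eq_iff)

lemma feasible_subset: "feasible X \<Longrightarrow> Y \<subseteq> X \<Longrightarrow> feasible Y"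
  unfolding feasible_iff by blast

lemma alloc_feasible:
  assumes "feasible X" "(i, S, w) \<in> X"
  shows "alloc X i = S"
proof -
  have "(THE S'. \<exists>w. (i, S', w) \<in> X) = S"
    using assms unfolding feasible_def by (intro the_equality) fastforce+
  then show ?thesis using assms(2) unfolding alloc_def by auto
qed

lemma finite_bids:
  assumes "inst_ok m C v"
  shows "finite (bids C v)"
proof -
  have "bids C v = (\<lambda>(i, S). (i, S, v i S)) ` (SIGMA i:{i. C i \<noteq> {}}. C i)"
    unfolding bids_def by auto
  moreover have "finite (SIGMA i:{i. C i \<noteq> {}}. C i)"
  proof (rule finite_SigmaI)
    show "finite {i. C i \<noteq> {}}" using assms unfolding inst_ok_def by blast
    fix i
    have "C i \<subseteq> Pow {0..<m}" using assms unfolding inst_ok_def by auto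
    then show "finite (C i)" using finite_subset by blast
  qed
  ultimately show ?thesis by simp
qed

lemma welfare_le_OPT:
  assumes "finite (bids C v)" "X \<subseteq> bids C v" "feasible X"
  shows "welfare X \<le> OPT C v"
  unfolding OPT_def using assms by (intro Max_ge) auto

definition approximates :: "nat \<Rightarrow> nat \<Rightarrow> real \<Rightarrow> (hist \<Rightarrow> ebid rel) \<Rightarrow> (hist \<Rightarrow> ebid \<Rightarrow> bool) \<Rightarrow> bool" where
  "approximates m d \<rho> ord dec \<longleftrightarrow> (\<forall>C v. inst_ok m C v \<longrightarrow> (\<forall>i. \<forall>S\<in>C i. card S \<le> d) \<longrightarrow>
     OPT C v \<le> \<rho> * welfare (pout ord dec (bids C v)))"

lemma approximatesD:
  "approximates m d \<rho> ord dec \<Longrightarrow> inst_ok m C v \<Longrightarrow> (\<forall>i. \<forall>S\<in>C i. card S \<le> d) \<Longrightarrow>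
     OPT C v \<le> \<rho> * welfare (pout ord dec (bids C v))"
  unfolding approximates_def by blast

lemma approximates_accepts_lone_bid:
  assumes "priority_mech m ord dec" "approximates m d \<rho> ord dec"
    and "S \<noteq> {}" "S \<subseteq> {0..<m}" "card S \<le> d" "0 < x"
  shows "dec [] (j, S, x)"
proof (rule ccontr)
  assume rejected: "\<not> dec [] (j, S, x)"
  define C where "C = (\<lambda>i. if i = j then {S} else ({} :: nat set set))"
  define v where "v = (\<lambda>(i::nat) (S::nat set). x)"
  have ok: "inst_ok m C v" using assms unfolding inst_ok_def C_def v_def by auto
  have bids: "bids C v = {(j, S, x)}" unfolding bids_def C_def v_def by auto
  have "linear_order (ord [])" using assms(1) unfolding priority_mech_def by blast
  then have "welfare (pout ord dec (bids C v)) = 0"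
    using rejected by (simp add: bids pout_singleton welfare_def)
  moreover have "x \<le> OPT C v"
    using welfare_le_OPT[of C v "{(j, S, x)}"] bids by (simp add: feasible_iff welfare_def)
  moreover have "\<forall>i. \<forall>S'\<in>C i. card S' \<le> d" using assms(5) by (simp add: C_def)
  ultimately show False using approximatesD[OF assms(2) ok] assms(6) by simp
qed

lemma truthful_ranks_higher_bid_first:
  assumes mech: "priority_mech m ord dec" and truthful: "truthful_verif m ord dec"
    and approx: "approximates m d \<rho> ord dec"
    and sets: "S \<noteq> S'" "S \<noteq> {}" "S' \<noteq> {}" "S \<subseteq> {0..<m}" "S' \<subseteq> {0..<m}" "card S \<le> d" "card S' \<le> d"
    and weights: "0 < w" "w < u"
  shows "((n, S, u), (n, S', w)) \<in> ord []"
proof (rule ccontr)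
  have lin: "linear_order (ord [])" and lin_all: "\<forall>h. linear_order (ord h)"
    and feas: "\<And>C v. inst_ok m C v \<Longrightarrow> feasible (pout ord dec (bids C v))"
    using mech unfolding priority_mech_def by auto
  assume "((n, S, u), (n, S', w)) \<notin> ord []"
  then have ahead: "((n, S', w), (n, S, u)) \<in> ord []"
    using linear_order_total[OF lin] by blast
  define C where "C = (\<lambda>j. if j = n then {S', S} else ({} :: nat set set))"
  define b where "b = (\<lambda>(j::nat) (X::nat set). if X = S then u else 0)"
  define t where "t = (\<lambda>X::nat set. if X = S then u else w)"
  define Pb where "Pb = pout ord dec (bids C b)"
  define Pt where "Pt = pout ord dec (bids C (b(n := t)))"
  have ok_b: "inst_ok m C b" and ok_t: "inst_ok m C (b(n := t))"
    using sets weights unfolding inst_ok_def C_def b_def t_def by auto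
  have bids_b: "bids C b = {(n, S', 0), (n, S, u)}"
    and bids_t: "bids C (b(n := t)) = {(n, S', w), (n, S, u)}"
    using sets unfolding bids_def C_def b_def t_def by auto
  have "dec [] (n, S', w)"
    using approximates_accepts_lone_bid[OF mech approx sets(3,5,7) weights(1)] .
  then have "(n, S', w) \<in> Pt"
    unfolding Pt_def using pout_first_accepted[of ord, OF lin] bids_t ahead linear_order_refl[OF lin] by simp
  then have alloc_t: "alloc Pt n = S'"
    using alloc_feasible[OF feas[OF ok_t]] unfolding Pt_def by blast
  have "(n, S, u) \<notin> Pb"
  proof
    assume "(n, S, u) \<in> Pb"
    then have alloc_b: "alloc Pb n = S" using alloc_feasible[OF feas[OF ok_b]] unfolding Pb_def by blast
    have "val (b n) (alloc Pb n) \<le> val t (alloc Pb n) \<longrightarrow> val t (alloc Pb n) \<le> val t (alloc Pt n)"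
      using truthful ok_b ok_t unfolding truthful_verif_def Let_def Pb_def Pt_def by blast
    then show False
      using alloc_b alloc_t sets weights by (simp add: val_def b_def t_def)
  qed
  then have "Pb \<subseteq> {(n, S', 0)}"
    using pout_subset[OF lin_all finite_bids[OF ok_b], of dec] bids_b unfolding Pb_def by auto
  then have "welfare Pb = 0"
    unfolding welfare_def by (auto simp: subset_singleton_iff)
  moreover have "u \<le> OPT C b"
    using welfare_le_OPT[of C b "{(n, S, u)}"] bids_b by (simp add: feasible_iff welfare_def)
  moreover have "\<forall>j. \<forall>X\<in>C j. card X \<le> d" using sets by (simp add: C_def)
  ultimately show False
    using approximatesD[OF approx ok_b] weights unfolding Pb_def by fastforce
qed

lemma ratio_ge_star_instance:
  assumes mech: "priority_mech m ord dec" and approx: "approximates m d \<rho> ord dec"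
    and T: "T \<noteq> {}" "T \<subseteq> {0..<m}" "card T \<le> d"
    and N: "finite N" "i \<notin> N" "inj_on g N" "g ` N \<subseteq> T" and "0 < w"
    and ahead: "\<forall>n\<in>N. ((i, T, 1), (n, {g n}, w)) \<in> ord []"
  shows "real (card N) * w \<le> \<rho>"
proof -
  have lin: "linear_order (ord [])" and lin_all: "\<forall>h. linear_order (ord h)"
    and feas: "\<And>C v. inst_ok m C v \<Longrightarrow> feasible (pout ord dec (bids C v))"
    using mech unfolding priority_mech_def by auto
  define s where "s = (\<lambda>n. (n, {g n}, w))"
  define C where "C = (\<lambda>n. if n = i then {T} else if n \<in> N then {{g n}} else ({} :: nat set set))"
  define v where "v = (\<lambda>(n::nat) (S::nat set). if n = i then 1 else w)"
  define P where "P = pout ord dec (bids C v)"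
  have "g n \<in> {0..<m}" if "n \<in> N" for n
    using N T that by blast
  then have ok: "inst_ok m C v"
    using N T \<open>0 < w\<close> unfolding inst_ok_def C_def v_def
    by (auto intro: finite_subset[of _ "insert i N"])
  have "0 < card T" using T(1,2) by (simp add: card_gt_0_iff finite_subset)
  then have card_C: "\<forall>n. \<forall>S\<in>C n. card S \<le> d" using T(3) by (simp add: C_def)
  have bids: "bids C v = insert (i, T, 1) (s ` N)"
    using N unfolding bids_def C_def v_def s_def by auto
  have "dec [] (i, T, 1)"
    using approximates_accepts_lone_bid[OF mech approx T(1-3)] by simp
  then have first: "(i, T, 1) \<in> P"
    unfolding P_def using pout_first_accepted[of ord, OF lin finite_bids[OF ok]] bids ahead
      linear_order_refl[OF lin] by (simp add: s_def)
  have "feasible P" unfolding P_def using feas[OF ok] .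
  have "P = {(i, T, 1)}"
  proof -
    have "y = (i, T, 1)" if y: "y \<in> P" for y
    proof (rule ccontr)
      assume other: "y \<noteq> (i, T, 1)"
      then obtain n where "n \<in> N" "y = s n"
        using y pout_subset[OF lin_all finite_bids[OF ok]] bids unfolding P_def by blast
      moreover have "feasible {(i, T, 1), y}"
        using feasible_subset[OF \<open>feasible P\<close>, of "{(i, T, 1), y}"] first y by simp
      ultimately show False using N other unfolding feasible_iff s_def by auto
    qed
    then show ?thesis using first by blast
  qed
  then have "\<rho> * welfare P = \<rho>" by (simp add: welfare_def)
  moreover have "welfare (s ` N) = real (card N) * w"
    using N unfolding welfare_def by (simp add: sum.reindex inj_on_def s_def)
  moreover have "feasible (s ` N)"
    using N unfolding feasible_iff s_def inj_on_def by auto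
  then have "welfare (s ` N) \<le> OPT C v"
    using welfare_le_OPT[OF finite_bids[OF ok]] bids by blast
  ultimately show ?thesis using approximatesD[OF approx ok card_C] unfolding P_def by linarith
qed

theorem theorem14:
  fixes m d :: nat and \<delta> :: real
    and ord :: "hist \<Rightarrow> ebid rel" and dec :: "hist \<Rightarrow> ebid \<Rightarrow> bool"
  assumes "2 \<le> d" and "d \<le> m" and "\<delta> > 0"
    and "priority_mech m ord dec"
    and "truthful_verif m ord dec"
  shows "\<exists>C v. inst_ok m C v \<and> (\<forall>i. \<forall>S\<in>C i. card S \<le> d) \<and>
           (1 - \<delta>) * real d * welfare (pout ord dec (bids C v)) < OPT C v"
proof (rule ccontr)
  assume "\<not> ?thesis"
  then have approx: "approximates m d ((1 - \<delta>) * real d) ord dec"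
    unfolding approximates_def by (auto simp: not_less)
  have lin: "linear_order (ord [])" using assms(4) unfolding priority_mech_def by blast
  define T where "T = {0..<d}"
  define w :: real where "w = max (1 - \<delta> / 2) (1 / 2)"
  have T: "T \<noteq> {}" "T \<subseteq> {0..<m}" "card T = d" using assms(1,2) by (auto simp: T_def)
  have w: "0 < w" "w < 1" "1 - \<delta> < w" using assms(3) by (auto simp: w_def)
  obtain i where "i \<le> d" and least: "\<forall>n\<le>d. ((i, T, 1), (n, T, 1)) \<in> ord []"
    using linear_order_finite_least[OF lin, of "(\<lambda>n. (n, T, 1::real)) ` {..d}"] by auto
  have "card ({..d} - {i}) = d" using \<open>i \<le> d\<close> by simp
  then obtain g where g: "bij_betw g ({..d} - {i}) T"
    using finite_same_card_bij[of "{..d} - {i}" T] T(3) by (auto simp: T_def)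
  have ahead: "((i, T, 1), (n, {g n}, w)) \<in> ord []" if "n \<in> {..d} - {i}" for n
  proof -
    have "g n \<in> T" using g that by (auto dest: bij_betw_apply)
    moreover have "T \<noteq> {g n}" using T(3) assms(1) by auto
    ultimately have "((n, T, 1), (n, {g n}, w)) \<in> ord []"
      using T w assms(1) by (intro truthful_ranks_higher_bid_first[OF assms(4,5) approx]) auto
    then show ?thesis using least that linear_order_trans[OF lin] by blast
  qed
  have "real (card ({..d} - {i})) * w \<le> (1 - \<delta>) * real d"
    by (rule ratio_ge_star_instance[OF assms(4) approx T(1,2)])
      (use T(3) assms(1) g w ahead in \<open>auto simp: bij_betw_def\<close>)
  then show False using \<open>card ({..d} - {i}) = d\<close> w assms(1) by simp
qed

end
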